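(* Let $d\ge3$ and $\varepsilon\in(0,1]$. Then $$N_{[\,]}(\varepsilon,\mathcal R_d,\|\cdot\|_{L^1})\le\Big(\frac{d^d}{d!}\Big)^2\Big(\frac2\varepsilon-\frac12\Big(1-\frac3d\Big)\Big)^{2d}\le\Big(\frac{d^d}{d!}\Big)^2\Big(\frac2\varepsilon\Big)^{2d}.$$
   Context: Let $I^d=[0,1)^d$ and $\lambda^d$ be Lebesgue measure; all norms are in $L^1(I^d,\lambda^d)$. For $y,z\in I^d$ let $[y,z)=\prod_{i=1}^d[y_i,z_i)$, and let $\mathcal R_d=\{1_{[y,z)}: y,z\in I^d\}$ be the set of indicator functions of half-open axis-parallel boxes in $I^d$. For functions $\ell,u\in L^1$, the bracket $[\ell,u]$ is $\{f\in L^1:\ell\le f\le u\text{ pointwise}\}$; it is an $\varepsilon$-bracket if $\|u-\ell\|_{L^1}\le\varepsilon$. The bracketing number $N_{[\,]}(\varepsilon,\mathcal F,\|\cdot\|_{L^1})$ is the minimal number of $\varepsilon$-brackets whose union contains $\mathcal F$. *)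

theory Defs
  imports "HOL-Analysis.Analysis"
begin

text \<open>The dimension d is CARD('n); points of R^d are vectors of type real^'n.\<close>

definition unit_cube :: "(real^'n) set" where
  "unit_cube = {x. \<forall>i. 0 \<le> x$i \<and> x$i < 1}"

definition box_co :: "real^'n \<Rightarrow> real^'n \<Rightarrow> (real^'n) set" where
  "box_co y z = {x. \<forall>i. y$i \<le> x$i \<and> x$i < z$i}"

definition L1_cube :: "(real^'n \<Rightarrow> real) \<Rightarrow> bool" where
  "L1_cube f \<longleftrightarrow> set_integrable lborel (unit_cube :: (real^'n) set) f"

definition L1_norm :: "(real^'n \<Rightarrow> real) \<Rightarrow> real" where
  "L1_norm f = (LINT x:(unit_cube :: (real^'n) set)|lborel. \<bar>f x\<bar>)"

definition bracket :: "(real^'n \<Rightarrow> real) \<Rightarrow> (real^'n \<Rightarrow> real) \<Rightarrow> (real^'n \<Rightarrow> real) set" where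
  "bracket l u = {f. L1_cube f \<and> (\<forall>x\<in>unit_cube. l x \<le> f x \<and> f x \<le> u x)}"

definition eps_bracket :: "real \<Rightarrow> (real^'n \<Rightarrow> real) \<Rightarrow> (real^'n \<Rightarrow> real) \<Rightarrow> bool" where
  "eps_bracket eps l u \<longleftrightarrow> L1_cube l \<and> L1_cube u \<and> L1_norm (\<lambda>x. u x - l x) \<le> eps"

text \<open>Minimal number of eps-brackets covering F (infinity if none).\<close>
definition bracketing_number :: "real \<Rightarrow> (real^'n \<Rightarrow> real) set \<Rightarrow> ereal" where
  "bracketing_number eps F =
     (INF B \<in> {B. finite B \<and> (\<forall>(l,u)\<in>B. eps_bracket eps l u)
                 \<and> F \<subseteq> (\<Union>(l,u)\<in>B. bracket l u)}. ereal (real (card B)))"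

definition rect_class :: "(real^'n \<Rightarrow> real) set" where
  "rect_class = {indicator (box_co y z) | y z. y \<in> unit_cube \<and> z \<in> unit_cube}"

end

theory Submission
  imports Defs
begin

text \<open>Order the coordinates and round a box \<open>[y, z)\<close> coordinate by coordinate: the first
  coordinate to a grid of \<open>N\<close> cells, and each later one to a grid with as many cells as the
  previous inner interval contains. The inner and outer rounded boxes form a bracket; their
  difference lies in \<open>2d\<close> slabs, and the choice of resolutions makes each slab have measure at
  most \<open>1/N\<close>, so with \<open>N = \<lceil>2d/\<epsilon>\<rceil>\<close> this is an \<open>\<epsilon>\<close>-bracket. Counting the possible roundings gives
  at most \<open>\<Sum>i\<le>d. (N + i) choose 2i\<close> brackets, and this sum is estimated by pairing the factors of the
  falling factorials and a lower bound for the central binomial coefficient.\<close>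

section \<open>Sums of binomial coefficients\<close>

definition sum_binom_even :: "nat \<Rightarrow> nat \<Rightarrow> nat" where
  "sum_binom_even m N = (\<Sum>i\<le>m. (N + i) choose (2 * i))"

definition sum_binom_odd :: "nat \<Rightarrow> nat \<Rightarrow> nat" where
  "sum_binom_odd m N = (\<Sum>i<m. (N + i + 1) choose (2 * i + 1))"

lemma sum_binom_even_Suc_right:
  "sum_binom_even m (Suc N) = sum_binom_even m N + sum_binom_odd m N"
  unfolding sum_binom_even_def sum_binom_odd_def
  by (simp add: sum.atMost_shift sum.distrib)

lemma sum_binom_odd_Suc_Suc:
  "sum_binom_odd (Suc m) (Suc N) = sum_binom_odd (Suc m) N + sum_binom_even m (Suc N)"
  unfolding sum_binom_even_def sum_binom_odd_def
  by (simp add: sum.distrib lessThan_Suc_atMost)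

lemma mono_sum_binom_even: "mono (sum_binom_even m)"
  by (simp add: incseq_Suc_iff sum_binom_even_Suc_right)

lemma one_le_sum_binom_odd: "1 \<le> sum_binom_odd (Suc m) N"
  unfolding sum_binom_odd_def by (subst sum.lessThan_Suc_shift) (simp del: binomial_Suc_Suc)

lemma weighted_sum_le_sum_binom_even:
  fixes f :: "nat \<Rightarrow> nat"
  assumes f0: "f 0 \<le> 1" and f_Suc: "\<And>j. f (Suc j) \<le> sum_binom_even m (Suc j)"
  shows "(\<Sum>j<N. (N - j) * f j) \<le> sum_binom_even (Suc m) N"
proof -
  have "(\<Sum>j<N. (N - j) * f j) \<le> sum_binom_even (Suc m) N
        \<and> (\<Sum>j<Suc N. f j) \<le> sum_binom_odd (Suc m) N"
  proof (induction N)
    case 0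
    show ?case using f0 one_le_sum_binom_odd[of m 0] by simp
  next
    case (Suc N)
    have "(\<Sum>j<Suc N. (Suc N - j) * f j) = (\<Sum>j<N. (N - j) * f j) + (\<Sum>j<Suc N. f j)"
      by (simp add: Suc_diff_le algebra_simps flip: sum.distrib)
    then have "(\<Sum>j<Suc N. (Suc N - j) * f j) \<le> sum_binom_even (Suc m) (Suc N)"
      using Suc.IH by (simp add: sum_binom_even_Suc_right)
    moreover have "(\<Sum>j<Suc (Suc N). f j) \<le> sum_binom_odd (Suc m) (Suc N)"
      using Suc.IH f_Suc[of N] by (simp add: sum_binom_odd_Suc_Suc)
    ultimately show ?case ..
  qed
  then show ?thesis ..
qed

lemma binomial_mult_fact: "k \<le> n \<Longrightarrow> real (n choose k) * fact k = fact n / fact (n - k)"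
  by (simp add: binomial_fact)

lemma binomial_mult_fact_Suc:
  assumes "Suc i \<le> N"
  shows "real ((N + Suc i) choose (2 * Suc i)) * fact (2 * Suc i)
       = real ((N + i) choose (2 * i)) * fact (2 * i) * ((real N + real i + 1) * (real N - real i))"
proof -
  obtain k where k: "N = Suc i + k" using assms le_Suc_ex by blast
  have "real ((N + Suc i) choose (2 * Suc i)) * fact (2 * Suc i) = fact (Suc (N + i)) / fact k"
    by (subst binomial_mult_fact) (simp_all add: k)
  also have "\<dots> = fact (N + i) / fact (Suc k) * ((real N + real i + 1) * real (Suc k))"
    by (simp add: field_simps del: of_nat_Suc) (simp add: algebra_simps)
  also have "\<dots> = real ((N + i) choose (2 * i)) * fact (2 * i) * ((real N + real i + 1) * (real N - real i))"
    by (subst binomial_mult_fact) (simp_all add: k)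
  finally show ?thesis .
qed

text \<open>The falling factorial \<open>(N+i)\<cdot>\<dots>\<cdot>(N-i+1)\<close> pairs up into factors
  \<open>(N-j)(N+j+1) \<le> (N+1/2)\<^sup>2\<close>.\<close>
lemma binomial_mult_fact_le_power:
  "i \<le> N \<Longrightarrow> real ((N + i) choose (2 * i)) * fact (2 * i) \<le> (real N + 1/2) ^ (2 * i)"
proof (induction i)
  case 0
  then show ?case by simp
next
  case (Suc i)
  have pair: "(real N + real i + 1) * (real N - real i) \<le> (real N + 1/2)\<^sup>2"
    by (simp add: power2_eq_square algebra_simps)
  have "real ((N + Suc i) choose (2 * Suc i)) * fact (2 * Suc i)
      = real ((N + i) choose (2 * i)) * fact (2 * i) * ((real N + real i + 1) * (real N - real i))"
    using Suc.prems by (rule binomial_mult_fact_Suc)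
  also have "\<dots> \<le> (real N + 1/2) ^ (2 * i) * (real N + 1/2)\<^sup>2"
    using Suc.prems by (intro mult_mono Suc.IH pair) auto
  also have "\<dots> = (real N + 1/2) ^ (2 * Suc i)"
    by (simp flip: power_add)
  finally show ?case .
qed

lemma fact_le_fact_mult_power:
  assumes "m \<le> n"
  shows "(fact n :: real) \<le> fact m * real n ^ (n - m)"
  using assms
proof (induction n rule: dec_induct)
  case base
  then show ?case by simp
next
  case (step n)
  have "(fact (Suc n) :: real) = real (Suc n) * fact n" by simp
  also have "\<dots> \<le> real (Suc n) * (fact m * real n ^ (n - m))"
    using step.IH by (intro mult_left_mono) auto
  also have "\<dots> \<le> real (Suc n) * (fact m * real (Suc n) ^ (n - m))"
    by (intro mult_left_mono power_mono) auto
  also have "\<dots> = fact m * real (Suc n) ^ (Suc n - m)"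
    using step.hyps by (simp add: Suc_diff_le)
  finally show ?case .
qed

lemma central_binomial_Suc:
  "(d + 1) * ((2 * d + 2) choose (d + 1)) = 2 * (2 * d + 1) * ((2 * d) choose d)"
proof -
  have "(d + 1) * ((2 * d + 2) choose (d + 1)) = (d + 1) * (2 * ((2 * d + 1) choose d))"
    using Suc_times_binomial[of d "2 * d + 1"] by (simp del: binomial_Suc_Suc add: algebra_simps)
  then have "(2 * d + 2) choose (d + 1) = 2 * ((2 * d + 1) choose d)"
    by (simp only: mult_cancel1) simp
  moreover have "(d + 1) * ((2 * d + 1) choose d) = (2 * d + 1) * ((2 * d) choose d)"
    using binomial_absorb_comp[of "2 * d + 1" d] by (simp del: binomial_Suc_Suc)
  ultimately show ?thesis
    by (simp del: binomial_Suc_Suc add: algebra_simps)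
qed

lemma central_binomial_lower_bound:
  "4 \<le> d \<Longrightarrow> (d + 1) * 16 ^ d \<le> 9 ^ d * ((2 * d) choose d)"
proof (induction d rule: dec_induct)
  case base
  have "(8::nat) choose 4 = 70" by (simp add: numeral_eq_Suc)
  then show ?case by simp
next
  case (step d)
  have "(Suc d + 1) * 16 ^ Suc d * (d + 1) = 16 * (d + 2) * ((d + 1) * 16 ^ d)"
    by (simp add: algebra_simps)
  also have "\<dots> \<le> 16 * (d + 2) * (9 ^ d * ((2 * d) choose d))"
    using step.IH by simp
  also have "\<dots> \<le> 9 * (2 * (2 * d + 1)) * (9 ^ d * ((2 * d) choose d))"
    using step.hyps by (intro mult_right_mono) auto
  also have "\<dots> = 9 ^ Suc d * ((d + 1) * ((2 * d + 2) choose (d + 1)))"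
    unfolding central_binomial_Suc by (simp add: algebra_simps)
  also have "\<dots> = 9 ^ Suc d * ((2 * Suc d) choose Suc d) * (d + 1)"
    by (simp del: binomial_Suc_Suc add: algebra_simps)
  finally show ?case by (simp only: mult_le_cancel2)
qed

lemma succ_div_central_binomial_le:
  assumes d: "3 \<le> d" and x: "2 * real d + 1/2 \<le> x"
  shows "real (d + 1) / real ((2 * d) choose d) \<le> ((x - real d / 2) / x) ^ (2 * d)"
proof (cases "d = 3")
  case True
  have "real (d + 1) / real ((2 * d) choose d) = 1/5"
    using True by (simp add: numeral_eq_Suc)
  also have "\<dots> \<le> (10/13) ^ 6" by (simp add: power_divide)
  also have "\<dots> \<le> ((x - 3/2) / x) ^ 6"
    using x True by (intro power_mono) (simp_all add: field_simps)
  finally show ?thesis using True by simp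
next
  case False
  then have "4 \<le> d" using d by simp
  then have "real ((d + 1) * 16 ^ d) \<le> real (9 ^ d * ((2 * d) choose d))"
    by (simp only: of_nat_le_iff central_binomial_lower_bound)
  then have "real (d + 1) * 16 ^ d \<le> 9 ^ d * real ((2 * d) choose d)"
    by (simp add: algebra_simps)
  then have "real (d + 1) / real ((2 * d) choose d) \<le> 9 ^ d / 16 ^ d"
    by (simp add: field_simps)
  also have "(9::real) ^ d / 16 ^ d = (3/4) ^ (2 * d)"
    by (simp add: power_mult power_divide)
  also have "\<dots> \<le> ((x - real d / 2) / x) ^ (2 * d)"
    using x by (intro power_mono) (simp_all add: field_simps)
  finally show ?thesis .
qed

lemma binomial_mult_fact_sq_le:
  assumes "i \<le> d" and "2 * d \<le> N"
  shows "real ((N + i) choose (2 * i)) * (fact d)\<^sup>2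
         \<le> (real N + 1/2) ^ (2 * d) / real ((2 * d) choose d)"
proof -
  define x where "x = real N + 1/2"
  define C where "C = real ((2 * d) choose d)"
  have "C > 0" unfolding C_def by simp
  have x: "2 * real d \<le> x" using assms unfolding x_def by simp
  have fact_sq: "(fact d)\<^sup>2 * C = (fact (2 * d) :: real)"
    using binomial_mult_fact[of d "2 * d"] \<open>C > 0\<close> unfolding C_def
    by (simp add: power2_eq_square field_simps mult_2)
  have "real ((N + i) choose (2 * i)) * (fact d)\<^sup>2 * C = real ((N + i) choose (2 * i)) * fact (2 * d)"
    by (simp add: fact_sq flip: mult.assoc)
  also have "\<dots> \<le> real ((N + i) choose (2 * i)) * (fact (2 * i) * x ^ (2 * d - 2 * i))"
  proof (intro mult_left_mono order.trans[OF fact_le_fact_mult_power])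
    show "fact (2 * i) * real (2 * d) ^ (2 * d - 2 * i) \<le> fact (2 * i) * x ^ (2 * d - 2 * i)"
      using x by (intro mult_left_mono power_mono) auto
  qed (use assms in auto)
  also have "\<dots> = real ((N + i) choose (2 * i)) * fact (2 * i) * x ^ (2 * d - 2 * i)"
    by simp
  also have "\<dots> \<le> x ^ (2 * i) * x ^ (2 * d - 2 * i)"
    using binomial_mult_fact_le_power[of i N] assms x unfolding x_def by (intro mult_right_mono) auto
  also have "\<dots> = x ^ (2 * d)"
    using assms by (simp flip: power_add)
  finally show ?thesis
    using \<open>C > 0\<close> unfolding x_def[symmetric] C_def[symmetric] by (simp add: field_simps)
qed

text \<open>Each of the \<open>d+1\<close> terms is at most \<open>x\<^sup>2\<^sup>d / (2d)!\<close> with \<open>x = N + 1/2\<close>,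
  and \<open>(d+1)(d!)\<^sup>2/(2d)! \<le> (1 - d/(2x))\<^sup>2\<^sup>d\<close> as soon as \<open>d \<ge> 3\<close>.\<close>
lemma sum_binom_even_le:
  assumes d: "3 \<le> d" and N: "2 * d \<le> N"
  shows "real (sum_binom_even d N) * (fact d)\<^sup>2 \<le> (real N + 1/2 - real d / 2) ^ (2 * d)"
proof -
  define x where "x = real N + 1/2"
  have "x > 0" unfolding x_def by simp
  have "real (sum_binom_even d N) * (fact d)\<^sup>2 = (\<Sum>i\<le>d. real ((N + i) choose (2 * i)) * (fact d)\<^sup>2)"
    unfolding sum_binom_even_def of_nat_sum by (rule sum_distrib_right)
  also have "\<dots> \<le> (\<Sum>i\<le>d. x ^ (2 * d) / real ((2 * d) choose d))"
    unfolding x_def by (intro sum_mono binomial_mult_fact_sq_le) (use N in auto)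
  also have "\<dots> = real (d + 1) / real ((2 * d) choose d) * x ^ (2 * d)"
    by simp
  also have "\<dots> \<le> ((x - real d / 2) / x) ^ (2 * d) * x ^ (2 * d)"
    using d N by (intro mult_right_mono succ_div_central_binomial_le) (auto simp: x_def)
  also have "\<dots> = (x - real d / 2) ^ (2 * d)"
    using \<open>x > 0\<close> by (simp add: power_divide)
  finally show ?thesis unfolding x_def .
qed

section \<open>Nested grid codes\<close>

text \<open>A grid code records, coordinate by coordinate, a pair of cells \<open>a\<^sub>k \<le> b\<^sub>k\<close> of a grid
  with \<open>g\<^sub>k\<close> cells, where \<open>g\<^sub>0 = N\<close> and \<open>g\<^sub>k\<^sub>+\<^sub>1\<close> is the number \<open>b\<^sub>k - a\<^sub>k - 1\<close> of cells strictly
  between them (at least \<open>1\<close>; the subtraction is truncated).\<close>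
fun resolution :: "nat \<Rightarrow> (nat \<times> nat) list \<Rightarrow> nat \<Rightarrow> nat" where
  "resolution N ds 0 = N"
| "resolution N ds (Suc k) = max 1 (snd (ds ! k) - fst (ds ! k) - 1)"

definition grid_codes :: "nat \<Rightarrow> nat \<Rightarrow> (nat \<times> nat) list set" where
  "grid_codes N m = {ds. length ds = m \<and>
     (\<forall>k<m. fst (ds ! k) \<le> snd (ds ! k) \<and> snd (ds ! k) < resolution N ds k)}"

lemma resolution_Cons_Suc [simp]:
  "resolution N (p # ds) (Suc k) = resolution (max 1 (snd p - fst p - 1)) ds k"
  by (cases k) auto

lemma resolution_pos: "1 \<le> N \<Longrightarrow> 1 \<le> resolution N ds k"
  by (cases k) auto

lemma grid_codes_0 [simp]: "grid_codes N 0 = {[]}"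
  by (auto simp: grid_codes_def)

lemma grid_codes_Suc_subset:
  "grid_codes N (Suc m) \<subseteq> (\<Union>j<N. \<Union>a<N - j. (#) (a, a + j) ` grid_codes (max 1 (j - 1)) m)"
proof
  fix ds assume ds: "ds \<in> grid_codes N (Suc m)"
  then obtain a b r where ds_eq: "ds = (a, b) # r" and "length r = m"
    by (cases ds) (auto simp: grid_codes_def)
  have cell: "fst (ds ! k) \<le> snd (ds ! k) \<and> snd (ds ! k) < resolution N ds k" if "k < Suc m" for k
    using ds that by (simp add: grid_codes_def)
  have "a \<le> b" "b < N"
    using cell[of 0] by (simp_all add: ds_eq)
  moreover have "r \<in> grid_codes (max 1 (b - a - 1)) m"
    using cell[of "Suc _"] \<open>length r = m\<close> by (simp add: grid_codes_def ds_eq del: resolution.simps(2))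
  ultimately show "ds \<in> (\<Union>j<N. \<Union>a<N - j. (#) (a, a + j) ` grid_codes (max 1 (j - 1)) m)"
    unfolding ds_eq by (intro UN_I[of "b - a"] UN_I[of a] image_eqI) auto
qed

lemma finite_grid_codes: "finite (grid_codes N m)"
proof (induction m arbitrary: N)
  case (Suc m)
  show ?case by (rule finite_subset[OF grid_codes_Suc_subset]) (use Suc.IH in auto)
qed simp

lemma grid_codes_1: "grid_codes 1 m \<subseteq> {replicate m (0, 0)}"
proof
  fix ds assume ds: "ds \<in> grid_codes 1 m"
  have cell: "fst (ds ! k) \<le> snd (ds ! k)" "snd (ds ! k) < resolution 1 ds k" if "k < m" for k
    using ds that by (simp_all add: grid_codes_def)
  have "resolution 1 ds k = 1 \<and> ds ! k = (0, 0)" if "k < m" for k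
    using that
  proof (induction k)
    case 0
    then show ?case using cell[of 0] by (simp add: prod_eq_iff)
  next
    case (Suc k)
    then have "resolution 1 ds (Suc k) = 1" by simp
    then show ?case using cell[of "Suc k"] Suc.prems by (simp add: prod_eq_iff)
  qed
  then show "ds \<in> {replicate m (0, 0)}"
    using ds by (auto simp: grid_codes_def intro: nth_equalityI)
qed

lemma card_grid_codes_le: "card (grid_codes N m) \<le> sum_binom_even m N"
proof (induction m arbitrary: N)
  case 0
  then show ?case by (simp add: sum_binom_even_def)
next
  case (Suc m)
  define f where "f j = card (grid_codes (max 1 (j - 1)) m)" for j
  have "card (grid_codes N (Suc m))
        \<le> card (\<Union>j<N. \<Union>a<N - j. (#) (a, a + j) ` grid_codes (max 1 (j - 1)) m)"
    by (intro card_mono grid_codes_Suc_subset) (simp add: finite_grid_codes)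
  also have "\<dots> \<le> (\<Sum>j<N. \<Sum>a<N - j. card ((#) (a, a + j) ` grid_codes (max 1 (j - 1)) m))"
    by (intro order.trans[OF card_UN_le] sum_mono card_UN_le) (auto simp: finite_grid_codes)
  also have "\<dots> \<le> (\<Sum>j<N. (N - j) * f j)"
    unfolding f_def by (intro sum_mono order.trans[OF sum_mono[OF card_image_le]]) (auto simp: finite_grid_codes)
  also have "\<dots> \<le> sum_binom_even (Suc m) N"
  proof (rule weighted_sum_le_sum_binom_even)
    show "f 0 \<le> 1"
      using card_mono[OF _ grid_codes_1[of m]] by (simp add: f_def)
    show "f (Suc j) \<le> sum_binom_even m (Suc j)" for j
      using order.trans[OF Suc.IH monoD[OF mono_sum_binom_even[of m]], of "max 1 j" "Suc j"]
      by (simp add: f_def)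
  qed
  finally show ?case .
qed

fun grid_code :: "(nat \<Rightarrow> real) \<Rightarrow> (nat \<Rightarrow> real) \<Rightarrow> nat \<Rightarrow> nat \<Rightarrow> (nat \<times> nat) list" where
  "grid_code Y Z N 0 = []"
| "grid_code Y Z N (Suc m) =
     (let a = nat \<lfloor>Y 0 * real N\<rfloor>; b = nat \<lfloor>Z 0 * real N\<rfloor>
      in (a, b) # grid_code (\<lambda>j. Y (Suc j)) (\<lambda>j. Z (Suc j)) (max 1 (b - a - 1)) m)"

lemma length_grid_code [simp]: "length (grid_code Y Z N m) = m"
  by (induction m arbitrary: Y Z N) (simp_all add: Let_def)

lemma nth_grid_code:
  assumes "j < m"
  shows "grid_code Y Z N m ! j =
    (nat \<lfloor>Y j * real (resolution N (grid_code Y Z N m) j)\<rfloor>,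
     nat \<lfloor>Z j * real (resolution N (grid_code Y Z N m) j)\<rfloor>)"
  using assms
proof (induction m arbitrary: Y Z N j)
  case (Suc m)
  show ?case
  proof (cases j)
    case (Suc i)
    then show ?thesis
      using Suc.IH[of i "\<lambda>j. Y (Suc j)" "\<lambda>j. Z (Suc j)"] Suc.prems by (simp add: Let_def del: resolution.simps(2))
  qed (simp add: Let_def)
qed simp

lemma grid_code_in_grid_codes:
  assumes "1 \<le> N" and "\<And>j. j < m \<Longrightarrow> Y j \<le> Z j" and "\<And>j. j < m \<Longrightarrow> Z j < 1"
  shows "grid_code Y Z N m \<in> grid_codes N m"
  unfolding grid_codes_def
proof (intro CollectI conjI allI impI length_grid_code)
  fix k assume k: "k < m"
  define r where "r = resolution N (grid_code Y Z N m) k"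
  have "1 \<le> r" unfolding r_def using resolution_pos[OF assms(1)] .
  then have "Y k * r \<le> Z k * r" and "Z k * r < r"
    using assms(2,3)[OF k] by simp_all
  then have "\<lfloor>Y k * r\<rfloor> \<le> \<lfloor>Z k * r\<rfloor>" and "\<lfloor>Z k * r\<rfloor> < int r"
    by (simp add: floor_mono, linarith)
  then show "fst (grid_code Y Z N m ! k) \<le> snd (grid_code Y Z N m ! k)"
    and "snd (grid_code Y Z N m ! k) < resolution N (grid_code Y Z N m) k"
    unfolding nth_grid_code[OF k] r_def[symmetric] using \<open>1 \<le> r\<close> by (simp_all add: nat_mono)
qed

section \<open>Boxes and their measure\<close>

lemma box_co_sets [measurable]: "box_co (y :: real^'n) z \<in> sets borel"
proof -
  have "box_co y z = (\<Inter>i. {x. y$i \<le> x$i}) \<inter> (\<Inter>i. {x :: real^'n. x$i < z$i})"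
    by (auto simp: box_co_def)
  moreover have "closed {x :: real^'n. y$i \<le> x$i}" and "open {x :: real^'n. x$i < z$i}" for i
    by (intro closed_Collect_le open_Collect_less continuous_intros)+
  ultimately show ?thesis
    by (auto intro!: sets.Int sets.countable_INT borel_closed borel_open)
qed

lemma box_co_fmeasurable [intro]: "box_co (y :: real^'n) z \<in> fmeasurable lborel"
proof (rule fmeasurableI2[of "cbox y z"])
  show "box_co y z \<subseteq> cbox y z"
    by (auto simp: box_co_def mem_box_cart less_imp_le)
qed (simp_all add: box_co_sets)

lemma unit_cube_eq_box_co: "unit_cube = box_co 0 1"
  by (simp add: unit_cube_def box_co_def)

lemma unit_cube_sets [measurable]: "(unit_cube :: (real^'n) set) \<in> sets borel"
  unfolding unit_cube_eq_box_co by (rule box_co_sets)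

lemma box_co_eq_box_co_max: "box_co y z = box_co y (\<chi> i. max (y$i) (z$i))"
  unfolding box_co_def by (auto simp: less_max_iff_disj)

lemma L1_cube_indicator:
  assumes "S \<in> sets borel"
  shows "L1_cube (indicator S :: real^'n \<Rightarrow> real)"
proof -
  have "emeasure lborel (unit_cube \<inter> S) \<le> emeasure lborel (cbox (0 :: real^'n) 1)"
    by (intro emeasure_mono) (auto simp: unit_cube_def mem_box_cart less_imp_le)
  also have "\<dots> < \<infinity>" by (rule emeasure_lborel_cbox_finite)
  finally have "emeasure lborel (unit_cube \<inter> S) < \<infinity>" .
  moreover have "(\<lambda>x. indicator unit_cube x *\<^sub>R indicator S x) = (indicator (unit_cube \<inter> S) :: real^'n \<Rightarrow> real)"
    by (auto simp: fun_eq_iff split: split_indicator)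
  ultimately show ?thesis
    unfolding L1_cube_def set_integrable_def using assms by (simp add: integrable_indicator_iff)
qed

lemma L1_norm_indicator_diff:
  assumes "L \<subseteq> U"
  shows "L1_norm (\<lambda>x :: real^'n. indicator U x - indicator L x) = measure lborel (unit_cube \<inter> (U - L))"
proof -
  have "(\<lambda>x. indicator unit_cube x *\<^sub>R \<bar>indicator U x - indicator L x\<bar>)
        = (indicator (unit_cube \<inter> (U - L)) :: real^'n \<Rightarrow> real)"
    using assms by (auto simp: fun_eq_iff split: split_indicator)
  then show ?thesis
    unfolding L1_norm_def set_lebesgue_integral_def by simp
qed

lemma measure_cbox_le_prod:
  fixes p q :: "real^'n"
  shows "measure lborel (cbox p q) \<le> (\<Prod>i\<in>UNIV. max 0 (q$i - p$i))"
proof (cases "cbox p q = {}")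
  case False
  then have "measure lborel (cbox p q) = (\<Prod>i\<in>UNIV. q$i - p$i)"
    by (rule content_cbox_cart)
  also have "\<dots> \<le> (\<Prod>i\<in>UNIV. max 0 (q$i - p$i))"
    using False by (intro prod_mono) (auto simp: interval_ne_empty_cart)
  finally show ?thesis .
qed (simp add: prod_nonneg)

locale coordinate_ranking =
  fixes rank :: "'n::finite \<Rightarrow> nat"
  assumes bij_rank: "bij_betw rank UNIV {..<CARD('n)}"
begin

lemma rank_less: "rank i < CARD('n)"
  using bij_betw_apply[OF bij_rank] by blast

definition unrank :: "nat \<Rightarrow> 'n" where
  "unrank = inv_into UNIV rank"

lemma unrank_rank [simp]: "unrank (rank i) = i"
  unfolding unrank_def by (rule inv_into_f_f[OF bij_betw_imp_inj_on[OF bij_rank]]) simp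

lemma prod_rank: "(\<Prod>i\<in>UNIV. f (rank i)) = (\<Prod>k<CARD('n). f k)"
  by (rule prod.reindex_bij_betw[OF bij_rank])

definition ranked_box :: "(nat \<Rightarrow> real) \<Rightarrow> (nat \<Rightarrow> real) \<Rightarrow> (real^'n) set" where
  "ranked_box l u = box_co (\<chi> i. l (rank i)) (\<chi> i. u (rank i))"

definition ranked_cbox :: "(nat \<Rightarrow> real) \<Rightarrow> (nat \<Rightarrow> real) \<Rightarrow> (real^'n) set" where
  "ranked_cbox l u = cbox (\<chi> i. l (rank i)) (\<chi> i. u (rank i))"

lemma ranked_box_sets [measurable]: "ranked_box l u \<in> sets borel"
  unfolding ranked_box_def by (rule box_co_sets)

lemma mem_ranked_box: "x \<in> ranked_box l u \<longleftrightarrow> (\<forall>i. l (rank i) \<le> x$i \<and> x$i < u (rank i))"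
  by (simp add: ranked_box_def box_co_def)

lemma ranked_box_mono:
  assumes "\<And>j. L j \<le> l j" and "\<And>j. u j \<le> U j"
  shows "ranked_box l u \<subseteq> ranked_box L U"
  unfolding subset_iff mem_ranked_box by (meson assms order.trans less_le_trans)

lemma mem_ranked_cbox: "x \<in> ranked_cbox l u \<longleftrightarrow> (\<forall>i. l (rank i) \<le> x$i \<and> x$i \<le> u (rank i))"
  by (simp add: ranked_cbox_def mem_box_cart)

lemma measure_ranked_cbox_le: "measure lborel (ranked_cbox l u) \<le> (\<Prod>k<CARD('n). max 0 (u k - l k))"
proof -
  have "measure lborel (ranked_cbox l u) \<le> (\<Prod>i\<in>UNIV. max 0 (u (rank i) - l (rank i)))"
    using measure_cbox_le_prod[of "\<chi> i. l (rank i)" "\<chi> i. u (rank i)"] by (simp add: ranked_cbox_def)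
  also have "\<dots> = (\<Prod>k<CARD('n). max 0 (u k - l k))"
    by (rule prod_rank)
  finally show ?thesis .
qed

definition slab :: "(nat \<Rightarrow> real) \<Rightarrow> (nat \<Rightarrow> real) \<Rightarrow> (nat \<Rightarrow> real) \<Rightarrow> (nat \<Rightarrow> real)
    \<Rightarrow> nat \<Rightarrow> real \<Rightarrow> real \<Rightarrow> (real^'n) set" where
  "slab l u L U k a b = ranked_cbox
     (\<lambda>j. if j < k then l j else if j = k then a else L j)
     (\<lambda>j. if j < k then u j else if j = k then b else U j)"

lemma slab_sets [measurable]: "slab l u L U k a b \<in> sets borel"
  by (simp add: slab_def ranked_cbox_def)

lemma measure_slab_le:
  assumes "k < CARD('n)"
  shows "measure lborel (slab l u L U k a b)
    \<le> (\<Prod>j<k. max 0 (u j - l j)) * max 0 (b - a) * (\<Prod>j\<in>{k<..<CARD('n)}. max 0 (U j - L j))"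
proof -
  define w where "w j = max 0 ((if j < k then u j else if j = k then b else U j)
                                - (if j < k then l j else if j = k then a else L j))" for j
  have split: "{..<CARD('n)} = {..<k} \<union> insert k {k<..<CARD('n)}"
    using assms by auto
  have "measure lborel (slab l u L U k a b) \<le> (\<Prod>j<CARD('n). w j)"
    unfolding slab_def w_def by (rule measure_ranked_cbox_le)
  also have "\<dots> = (\<Prod>j<k. w j) * (w k * (\<Prod>j\<in>{k<..<CARD('n)}. w j))"
    unfolding split by (subst prod.union_disjoint) auto
  also have "\<dots> = (\<Prod>j<k. max 0 (u j - l j)) * max 0 (b - a) * (\<Prod>j\<in>{k<..<CARD('n)}. max 0 (U j - L j))"
  proof -
    have "(\<Prod>j<k. w j) = (\<Prod>j<k. max 0 (u j - l j))"
      by (intro prod.cong) (auto simp: w_def)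
    moreover have "(\<Prod>j\<in>{k<..<CARD('n)}. w j) = (\<Prod>j\<in>{k<..<CARD('n)}. max 0 (U j - L j))"
      by (intro prod.cong) (auto simp: w_def)
    ultimately show ?thesis by (simp add: w_def mult.assoc)
  qed
  finally show ?thesis .
qed

text \<open>A point of \<open>[L, U)\<close> outside \<open>[l, u)\<close> lies in the lower or upper slab of the
  least rank in which it violates \<open>[l, u)\<close>.\<close>
lemma ranked_box_diff_subset:
  "ranked_box L U - ranked_box l u
   \<subseteq> (\<Union>k<CARD('n). slab l u L U k (L k) (l k) \<union> slab l u L U k (u k) (U k))"
proof
  fix x assume x: "x \<in> ranked_box L U - ranked_box l u"
  define bad where "bad i \<longleftrightarrow> \<not> (l (rank i) \<le> x$i \<and> x$i < u (rank i))" for i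
  obtain i0 where "bad i0" using x by (auto simp: mem_ranked_box bad_def)
  then obtain i where "bad i" and least: "\<And>i'. bad i' \<Longrightarrow> rank i \<le> rank i'"
    using ex_has_least_nat[of bad i0 rank] by blast
  define k where "k = rank i"
  have rank_eq: "rank i' = k \<Longrightarrow> i' = i" for i'
    using bij_betw_imp_inj_on[OF bij_rank] by (auto simp: k_def inj_def)
  have outer: "L (rank i') \<le> x$i' \<and> x$i' < U (rank i')" for i'
    using x by (simp add: mem_ranked_box)
  have below: "l (rank i') \<le> x$i' \<and> x$i' < u (rank i')" if "rank i' < k" for i'
    using least[of i'] that by (auto simp: bad_def k_def)
  have in_slab: "x \<in> slab l u L U k a b" if "a \<le> x$i" and "x$i \<le> b" for a b
    unfolding slab_def mem_ranked_cbox
  proof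
    fix j
    consider "rank j < k" | "rank j = k" | "k < rank j" by linarith
    then show "(if rank j < k then l (rank j) else if rank j = k then a else L (rank j)) \<le> x$j \<and>
        x$j \<le> (if rank j < k then u (rank j) else if rank j = k then b else U (rank j))"
      using below[of j] outer[of j] rank_eq[of j] that by cases (auto simp: less_imp_le)
  qed
  have "x \<in> slab l u L U k (L k) (l k) \<or> x \<in> slab l u L U k (u k) (U k)"
  proof (cases "x$i < l k")
    case True
    then show ?thesis using in_slab outer[of i] by (simp add: k_def less_imp_le)
  next
    case False
    then have "u k \<le> x$i" using \<open>bad i\<close> by (simp add: bad_def k_def)
    then show ?thesis using in_slab outer[of i] by (simp add: k_def less_imp_le)
  qed
  then show "x \<in> (\<Union>k<CARD('n). slab l u L U k (L k) (l k) \<union> slab l u L U k (u k) (U k))"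
    using rank_less[of i] by (auto simp: k_def)
qed

lemma measure_ranked_box_diff_le:
  "measure lborel (ranked_box L U - ranked_box l u)
   \<le> (\<Sum>k<CARD('n). (\<Prod>j<k. max 0 (u j - l j)) * (max 0 (l k - L k) + max 0 (U k - u k))
        * (\<Prod>j\<in>{k<..<CARD('n)}. max 0 (U j - L j)))"
proof -
  let ?S = "\<lambda>k. slab l u L U k (L k) (l k) \<union> slab l u L U k (u k) (U k)"
  let ?P = "\<lambda>k. \<Prod>j<k. max 0 (u j - l j)" and ?Q = "\<lambda>k. \<Prod>j\<in>{k<..<CARD('n)}. max 0 (U j - L j)"
  have "(\<Union>k<CARD('n). ?S k) \<in> fmeasurable lborel"
    by (intro fmeasurable.finite_UN fmeasurable.Un) (auto simp: slab_def ranked_cbox_def)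
  then have "measure lborel (ranked_box L U - ranked_box l u) \<le> measure lborel (\<Union>k<CARD('n). ?S k)"
    by (intro measure_mono_fmeasurable ranked_box_diff_subset) measurable
  also have "\<dots> \<le> (\<Sum>k<CARD('n). measure lborel (?S k))"
    by (intro measure_UNION_le) auto
  also have "\<dots> \<le> (\<Sum>k<CARD('n). measure lborel (slab l u L U k (L k) (l k))
                                 + measure lborel (slab l u L U k (u k) (U k)))"
    by (intro sum_mono measure_Un_le) auto
  also have "\<dots> \<le> (\<Sum>k<CARD('n). ?P k * max 0 (l k - L k) * ?Q k + ?P k * max 0 (U k - u k) * ?Q k)"
    by (intro sum_mono add_mono measure_slab_le) simp_all
  also have "\<dots> = (\<Sum>k<CARD('n). ?P k * (max 0 (l k - L k) + max 0 (U k - u k)) * ?Q k)"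
    by (simp add: distrib_left distrib_right)
  finally show ?thesis .
qed

end

section \<open>Grid brackets for rectangles\<close>

lemma prod_le_telescoping:
  fixes w h :: "nat \<Rightarrow> real"
  assumes "\<And>j. j < k \<Longrightarrow> 0 \<le> w j" and "\<And>j. j < k \<Longrightarrow> w j * h j \<le> h (Suc j)"
    and "\<And>j. j \<le> k \<Longrightarrow> 0 < h j"
  shows "(\<Prod>j<k. w j) \<le> h k / h 0"
  using assms
proof (induction k)
  case 0
  then show ?case by simp
next
  case (Suc k)
  have "(\<Prod>j<Suc k. w j) = (\<Prod>j<k. w j) * w k" by simp
  also have "\<dots> \<le> h k / h 0 * w k"
    using Suc by (intro mult_right_mono Suc.IH) auto
  also have "\<dots> = w k * h k / h 0" by simp
  also have "\<dots> \<le> h (Suc k) / h 0"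
    using Suc.prems less_imp_le[OF Suc.prems(3)[of 0]] by (intro divide_right_mono) auto
  finally show ?case .
qed

text \<open>The two slabs of rank \<open>k\<close> between the inner and outer grid boxes: the refinement
  condition on \<open>g\<close> makes the product over the lower ranks telescope to \<open>g k / g 0\<close>.\<close>
lemma nested_grid_slabs_le:
  fixes a b g :: "nat \<Rightarrow> real"
  assumes k: "k < d" and g: "\<And>j. 1 \<le> g j"
    and a: "\<And>j. 0 \<le> a j" and b: "\<And>j. j < d \<Longrightarrow> b j + 1 \<le> g j"
    and next_g: "\<And>j. b j - a j - 1 \<le> g (Suc j)"
  shows "(\<Prod>j<k. max 0 (b j / g j - (a j + 1) / g j))
        * (max 0 ((a k + 1) / g k - a k / g k) + max 0 ((b k + 1) / g k - b k / g k))
        * (\<Prod>j\<in>{k<..<d}. max 0 ((b j + 1) / g j - a j / g j)) \<le> 2 / g 0"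
proof -
  have g_pos: "0 < g j" for j
    using g[of j] by linarith
  let ?P = "\<Prod>j<k. max 0 (b j / g j - (a j + 1) / g j)"
  let ?Q = "\<Prod>j\<in>{k<..<d}. max 0 ((b j + 1) / g j - a j / g j)"
  have "?P \<le> g k / g 0"
  proof (rule prod_le_telescoping)
    fix j
    have "max 0 (b j / g j - (a j + 1) / g j) * g j = max 0 (b j - a j - 1)"
      using g[of j] by (simp add: max_def field_simps divide_le_0_iff)
    also have "\<dots> \<le> g (Suc j)"
      using g[of "Suc j"] next_g[of j] by simp
    finally show "max 0 (b j / g j - (a j + 1) / g j) * g j \<le> g (Suc j)" .
  qed (use g_pos in auto)
  moreover have "?Q \<le> 1"
  proof (intro prod_le_1 conjI)
    fix j assume "j \<in> {k<..<d}"
    then have "(b j + 1 - a j) / g j \<le> 1"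
      using a[of j] b[of j] g_pos[of j] by simp
    then show "max 0 ((b j + 1) / g j - a j / g j) \<le> 1"
      by (simp add: diff_divide_distrib)
  qed simp
  moreover have "max 0 ((a k + 1) / g k - a k / g k) + max 0 ((b k + 1) / g k - b k / g k) = 2 / g k"
    using g_pos[of k] by (simp add: field_simps)
  ultimately have "?P * (max 0 ((a k + 1) / g k - a k / g k) + max 0 ((b k + 1) / g k - b k / g k)) * ?Q
      \<le> g k / g 0 * (2 / g k) * 1"
    using g_pos[of k] g_pos[of 0] by (intro mult_mono) (auto intro: prod_nonneg)
  also have "\<dots> = 2 / g 0"
    using g_pos[of k] by simp
  finally show ?thesis .
qed

lemma nat_floor_mult_bounds:
  fixes t g :: real
  assumes "0 \<le> t" and "0 < g"
  shows "real (nat \<lfloor>t * g\<rfloor>) / g \<le> t" and "t < real (nat \<lfloor>t * g\<rfloor> + 1) / g"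
proof -
  have nat_floor: "real (nat \<lfloor>t * g\<rfloor>) = of_int \<lfloor>t * g\<rfloor>"
    using assms by simp
  show "real (nat \<lfloor>t * g\<rfloor>) / g \<le> t"
    unfolding nat_floor using assms by (simp add: divide_le_eq)
  show "t < real (nat \<lfloor>t * g\<rfloor> + 1) / g"
    unfolding of_nat_add nat_floor using assms by (simp add: less_divide_eq)
qed

context coordinate_ranking
begin

definition inner_box :: "nat \<Rightarrow> (nat \<times> nat) list \<Rightarrow> (real^'n) set" where
  "inner_box N ds = ranked_box
     (\<lambda>j. real (fst (ds ! j) + 1) / real (resolution N ds j)) (\<lambda>j. real (snd (ds ! j)) / real (resolution N ds j))"

definition outer_box :: "nat \<Rightarrow> (nat \<times> nat) list \<Rightarrow> (real^'n) set" where
  "outer_box N ds = ranked_box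
     (\<lambda>j. real (fst (ds ! j)) / real (resolution N ds j)) (\<lambda>j. real (snd (ds ! j) + 1) / real (resolution N ds j))"

lemma inner_box_subset_outer_box: "inner_box N ds \<subseteq> outer_box N ds"
  unfolding inner_box_def outer_box_def by (intro ranked_box_mono divide_right_mono) auto

lemma measure_outer_box_diff_inner_box:
  assumes ds: "ds \<in> grid_codes N CARD('n)" and N: "1 \<le> N"
  shows "measure lborel (outer_box N ds - inner_box N ds) \<le> 2 * real CARD('n) / real N"
proof -
  define g where "g j = real (resolution N ds j)" for j
  define a where "a j = real (fst (ds ! j))" for j
  define b where "b j = real (snd (ds ! j))" for j
  have "(\<Prod>j<k. max 0 (b j / g j - (a j + 1) / g j))
        * (max 0 ((a k + 1) / g k - a k / g k) + max 0 ((b k + 1) / g k - b k / g k))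
        * (\<Prod>j\<in>{k<..<CARD('n)}. max 0 ((b j + 1) / g j - a j / g j)) \<le> 2 / g 0"
    if "k < CARD('n)" for k
  proof (rule nested_grid_slabs_le[OF that])
    show "1 \<le> g j" for j
      using resolution_pos[OF N] by (simp add: g_def)
    show "0 \<le> a j" and "b j - a j - 1 \<le> g (Suc j)" for j
      by (auto simp: a_def b_def g_def of_nat_diff)
    show "b j + 1 \<le> g j" if "j < CARD('n)" for j
      using ds that by (auto simp: grid_codes_def b_def g_def)
  qed
  note summand_le = this
  have "measure lborel (outer_box N ds - inner_box N ds)
    \<le> (\<Sum>k<CARD('n). (\<Prod>j<k. max 0 (b j / g j - (a j + 1) / g j))
        * (max 0 ((a k + 1) / g k - a k / g k) + max 0 ((b k + 1) / g k - b k / g k))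
        * (\<Prod>j\<in>{k<..<CARD('n)}. max 0 ((b j + 1) / g j - a j / g j)))"
    unfolding outer_box_def inner_box_def a_def b_def g_def of_nat_add of_nat_1
    by (rule measure_ranked_box_diff_le)
  also have "\<dots> \<le> (\<Sum>k<CARD('n). 2 / real N)"
    using summand_le by (intro sum_mono) (simp add: g_def)
  also have "\<dots> = 2 * real CARD('n) / real N"
    by simp
  finally show ?thesis .
qed

lemma grid_boxes_eps_bracket:
  assumes "ds \<in> grid_codes N CARD('n)" and "1 \<le> N" and "2 * real CARD('n) / real N \<le> eps"
  shows "eps_bracket eps (indicator (inner_box N ds)) (indicator (outer_box N ds))"
proof -
  have "L1_norm (\<lambda>x. indicator (outer_box N ds) x - indicator (inner_box N ds) x :: real)
        = measure lborel (unit_cube \<inter> (outer_box N ds - inner_box N ds))"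
    by (rule L1_norm_indicator_diff[OF inner_box_subset_outer_box])
  also have "\<dots> \<le> measure lborel (outer_box N ds - inner_box N ds)"
  proof (intro measure_mono_fmeasurable fmeasurable_Diff)
    show "unit_cube \<inter> (outer_box N ds - inner_box N ds) \<in> sets lborel"
      unfolding outer_box_def inner_box_def by measurable
  qed (auto simp: outer_box_def inner_box_def ranked_box_def)
  also have "\<dots> \<le> eps"
    using measure_outer_box_diff_inner_box[OF assms(1,2)] assms(3) by linarith
  finally show ?thesis
    unfolding eps_bracket_def outer_box_def inner_box_def
    by (simp add: L1_cube_indicator ranked_box_sets)
qed

lemma box_co_between_grid_boxes:
  assumes N: "1 \<le> N" and y: "y \<in> unit_cube" and z: "z \<in> unit_cube" and yz: "\<And>i. y$i \<le> z$i"
  obtains ds where "ds \<in> grid_codes N CARD('n)"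
    and "inner_box N ds \<subseteq> box_co y z" and "box_co y z \<subseteq> outer_box N ds"
proof -
  define ds where "ds = grid_code (\<lambda>k. y $ unrank k) (\<lambda>k. z $ unrank k) N CARD('n)"
  define g where "g i = real (resolution N ds (rank i))" for i
  have g_pos: "0 < g i" for i
    using resolution_pos[OF N, of ds "rank i"] by (simp add: g_def)
  have y0: "0 \<le> y$i" and z1: "z$i < 1" for i
    using y z by (auto simp: unit_cube_def)
  have "ds \<in> grid_codes N CARD('n)"
    unfolding ds_def using N yz z1 by (intro grid_code_in_grid_codes)
  moreover have ds_nth: "ds ! rank i = (nat \<lfloor>y$i * g i\<rfloor>, nat \<lfloor>z$i * g i\<rfloor>)" for i
    using nth_grid_code[OF rank_less[of i], of "\<lambda>k. y $ unrank k" "\<lambda>k. z $ unrank k" N]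
    unfolding ds_def[symmetric] g_def unrank_rank by simp
  have y_bounds: "real (nat \<lfloor>y$i * g i\<rfloor>) / g i \<le> y$i" "y$i < real (nat \<lfloor>y$i * g i\<rfloor> + 1) / g i"
    and z_bounds: "real (nat \<lfloor>z$i * g i\<rfloor>) / g i \<le> z$i" "z$i < real (nat \<lfloor>z$i * g i\<rfloor> + 1) / g i" for i
    using nat_floor_mult_bounds[OF y0[of i] g_pos[of i]]
      nat_floor_mult_bounds[OF order.trans[OF y0 yz] g_pos[of i]] by auto
  have "inner_box N ds \<subseteq> box_co y z"
  proof
    fix x assume "x \<in> inner_box N ds"
    then have "real (nat \<lfloor>y$i * g i\<rfloor> + 1) / g i \<le> x$i \<and> x$i < real (nat \<lfloor>z$i * g i\<rfloor>) / g i" for i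
      by (simp add: inner_box_def mem_ranked_box ds_nth g_def del: of_nat_add)
    then have "y$i \<le> x$i \<and> x$i < z$i" for i
      using y_bounds[of i] z_bounds[of i] by (meson less_imp_le less_le_trans le_less_trans)
    then show "x \<in> box_co y z"
      by (simp add: box_co_def)
  qed
  moreover have "box_co y z \<subseteq> outer_box N ds"
  proof
    fix x assume "x \<in> box_co y z"
    then have "y$i \<le> x$i \<and> x$i < z$i" for i
      by (simp add: box_co_def)
    then have "real (nat \<lfloor>y$i * g i\<rfloor>) / g i \<le> x$i \<and> x$i < real (nat \<lfloor>z$i * g i\<rfloor> + 1) / g i" for i
      using y_bounds[of i] z_bounds[of i] by (meson order.trans less_trans)
    then show "x \<in> outer_box N ds"
      by (simp add: outer_box_def mem_ranked_box ds_nth g_def del: of_nat_add)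
  qed
  ultimately show ?thesis by (rule that)
qed

lemma rect_class_grid_bracket:
  assumes "1 \<le> N" and "f \<in> rect_class"
  shows "\<exists>ds\<in>grid_codes N CARD('n). f \<in> bracket (indicator (inner_box N ds)) (indicator (outer_box N ds))"
proof -
  obtain y z where f: "f = indicator (box_co y z)" and y: "y \<in> unit_cube" and z: "z \<in> unit_cube"
    using assms(2) by (auto simp: rect_class_def)
  define z' where "z' = (\<chi> i. max (y$i) (z$i))"
  have "z' \<in> unit_cube" and "\<And>i. y$i \<le> z'$i"
    using y z by (auto simp: unit_cube_def z'_def le_max_iff_disj)
  then obtain ds where "ds \<in> grid_codes N CARD('n)"
    and "inner_box N ds \<subseteq> box_co y z'" and "box_co y z' \<subseteq> outer_box N ds"
    by (rule box_co_between_grid_boxes[OF assms(1) y])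
  moreover have "f = indicator (box_co y z')"
    unfolding f z'_def by (subst box_co_eq_box_co_max) (rule refl)
  ultimately show ?thesis
    unfolding bracket_def using L1_cube_indicator[OF box_co_sets]
    by (intro bexI[of _ ds]) (auto split: split_indicator)
qed

end

lemma bracketing_number_rect_class_le:
  assumes N: "1 \<le> N" and eps: "2 * real CARD('n) / real N \<le> eps"
  shows "bracketing_number eps (rect_class :: (real^'n::finite \<Rightarrow> real) set)
         \<le> ereal (real (sum_binom_even CARD('n) N))"
proof -
  obtain rank :: "'n \<Rightarrow> nat" where "bij_betw rank UNIV {..<CARD('n)}"
    using ex_bij_betw_finite_nat[of "UNIV :: 'n set"] by (auto simp: atLeast0LessThan)
  then interpret coordinate_ranking rank
    by unfold_locales
  define B where "B = (\<lambda>ds. (indicator (inner_box N ds) :: real^'n \<Rightarrow> real,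
                                indicator (outer_box N ds) :: real^'n \<Rightarrow> real))
                       ` grid_codes N CARD('n)"
  have "finite B" and "card B \<le> sum_binom_even CARD('n) N"
    unfolding B_def using finite_grid_codes card_grid_codes_le
    by (auto intro: order.trans[OF card_image_le])
  moreover have "\<forall>(l, u)\<in>B. eps_bracket eps l u"
    unfolding B_def using grid_boxes_eps_bracket[OF _ N eps] by auto
  moreover have "rect_class \<subseteq> (\<Union>(l, u)\<in>B. bracket l u)"
    unfolding B_def using rect_class_grid_bracket[OF N] by fastforce
  ultimately have "bracketing_number eps (rect_class :: (real^'n \<Rightarrow> real) set) \<le> ereal (real (card B))"
    unfolding bracketing_number_def by (intro INF_lower) blast
  also have "\<dots> \<le> ereal (real (sum_binom_even CARD('n) N))"
    using \<open>card B \<le> _\<close> by simp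
  finally show ?thesis .
qed

lemma sum_binom_even_le_eps:
  assumes d: "3 \<le> d" and eps: "0 < eps" "eps \<le> 1"
    and N: "2 * real d / eps \<le> real N" "real N < 2 * real d / eps + 1"
  shows "real (sum_binom_even d N) \<le> (real d ^ d / fact d)\<^sup>2 * (2 / eps - 1/2 * (1 - 3 / real d)) ^ (2 * d)"
proof -
  define X where "X = 2 / eps - 1/2 * (1 - 3 / real d)"
  have "2 * real d \<le> 2 * real d / eps"
    using eps d by (simp add: le_divide_eq)
  then have "2 * d \<le> N"
    using N by linarith
  then have "real (sum_binom_even d N) * (fact d)\<^sup>2 \<le> (real N + 1/2 - real d / 2) ^ (2 * d)"
    using d by (intro sum_binom_even_le)
  also have "\<dots> \<le> (real d * X) ^ (2 * d)"
  proof (intro power_mono)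
    have "real d * X = 2 * real d / eps - real d / 2 + 3/2"
      using d by (simp add: X_def field_simps)
    then show "real N + 1/2 - real d / 2 \<le> real d * X"
      using N by linarith
  qed (use \<open>2 * d \<le> N\<close> in simp)
  also have "\<dots> = (real d ^ d)\<^sup>2 * X ^ (2 * d)"
    by (simp add: power_mult_distrib power_mult mult.commute)
  finally show ?thesis
    unfolding X_def by (simp add: power_divide field_simps)
qed

lemma power_two_div_minus_le:
  assumes "3 \<le> d" and "0 < eps" and "eps \<le> 1"
  shows "(2 / eps - 1/2 * (1 - 3 / real d)) ^ n \<le> (2 / eps) ^ n"
proof (rule power_mono)
  have "1/2 * (1 - 3 / real d) \<le> 1/2" and "2 \<le> 2 / eps"
    using assms(2,3) by (simp_all add: field_simps)
  then show "0 \<le> 2 / eps - 1/2 * (1 - 3 / real d)"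
    by linarith
qed (use assms(1) in \<open>simp add: field_simps\<close>)

theorem mainTheorem6:
  fixes eps :: real
  assumes "CARD('n::finite) \<ge> 3" and "0 < eps" and "eps \<le> 1"
  shows "bracketing_number eps (rect_class :: (real^'n \<Rightarrow> real) set)
           \<le> ereal ((real CARD('n) ^ CARD('n) / fact CARD('n))\<^sup>2
                   * (2 / eps - 1/2 * (1 - 3 / real CARD('n))) ^ (2 * CARD('n)))
       \<and> (real CARD('n) ^ CARD('n) / fact CARD('n))\<^sup>2
                   * (2 / eps - 1/2 * (1 - 3 / real CARD('n))) ^ (2 * CARD('n))
           \<le> (real CARD('n) ^ CARD('n) / fact CARD('n))\<^sup>2 * (2 / eps) ^ (2 * CARD('n))"
proof -
  define d where "d = CARD('n)"
  define N where "N = nat \<lceil>2 * real d / eps\<rceil>"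
  have d: "3 \<le> d" using assms(1) by (simp add: d_def)
  have N_ge: "2 * real d / eps \<le> real N"
    unfolding N_def by linarith
  moreover have "real N < 2 * real d / eps + 1"
    unfolding N_def using assms(2) by (simp add: of_nat_nat) linarith
  ultimately have sum_le: "real (sum_binom_even d N)
      \<le> (real d ^ d / fact d)\<^sup>2 * (2 / eps - 1/2 * (1 - 3 / real d)) ^ (2 * d)"
    using d assms(2,3) by (intro sum_binom_even_le_eps)
  have "0 < 2 * real d / eps"
    using d assms(2) by simp
  then have "1 \<le> N"
    using N_ge by linarith
  moreover have "2 * real d / real N \<le> eps"
    using N_ge assms(2) \<open>1 \<le> N\<close> by (simp add: divide_le_eq le_divide_eq mult.commute)
  ultimately have "bracketing_number eps (rect_class :: (real^'n \<Rightarrow> real) set) \<le> ereal (real (sum_binom_even d N))"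
    unfolding d_def by (rule bracketing_number_rect_class_le)
  moreover have "(2 / eps - 1/2 * (1 - 3 / real d)) ^ (2 * d) \<le> (2 / eps) ^ (2 * d)"
    using d assms(2,3) by (rule power_two_div_minus_le)
  ultimately show ?thesis
    using sum_le unfolding d_def by (auto intro: order.trans mult_left_mono)
qed

end
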